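(* Let $H^*$ be a graph and let $A, B \subseteq V(H^* )$ be disjoint sets such that every vertex of $A$ is isolated in $H^*$ and $B$ has the robust sapphire property for $H^*$. Let $F \subseteq \{ab \colon a \in A, b \in B\}$ and $H \coloneqq (V(H^* ), E(H^* ) \cup F)$. Let $B_{=1} \coloneqq \{b \in B \colon |N_H(b) \cap A| =1\}$, $A' \coloneqq \{a \in A \colon d_H(a) \geq 4,\ N_H(a) \subseteq B_{=1}\}$, and $B' \coloneqq N_H(A \setminus A')$. Then $(S(H^* ) \setminus B') \cup A' \subseteq S(H)$. In addition, $B \setminus N_H(A)$ has the robust sapphire property for $H$.
   Context: For a graph $G$ and $X\subseteq V(G)$, $N_G(X)=\{x\in V(G)\setminus X: xy\in E(G)\text{ for some }y\in X\}$ (external neighbourhood), $N_G(x)=N_G(\{x\})$, $d_G(x)$ is the degree and $\mathrm{dist}_G$ is graph distance. The strong $4$-core $S(G)$ is the maximal set $X\subseteq V(G)$ such that $|N_G(x)\cap X|\geq 4$ for every $x\in X\cup N_G(X)$ (well-defined since the union of two such sets is again such a set). A set $B\subseteq V(G)$ has the robust sapphire property for $G$ if (RS1) for every $x\in B\cup N_G(B)$ we have $\{x\}\cup N_G(x)\subseteq S(G)$ and $d_G(x)\ge 5$; and (RS2) for all distinct $b_1,b_2\in B$, $\mathrm{dist}_G(b_1,b_2)\geq 5$. *)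

theory Defs
  imports Main "HOL-Library.Extended_Nat"
begin

definition graph :: "'a set \<Rightarrow> 'a set set \<Rightarrow> bool" where
  "graph V E \<longleftrightarrow> finite V \<and> (\<forall>e\<in>E. e \<subseteq> V \<and> card e = 2)"

definition nbhd :: "'a set \<Rightarrow> 'a set set \<Rightarrow> 'a set \<Rightarrow> 'a set" where
  "nbhd V E X = {x \<in> V - X. \<exists>y\<in>X. {x, y} \<in> E}"

definition degree :: "'a set \<Rightarrow> 'a set set \<Rightarrow> 'a \<Rightarrow> nat" where
  "degree V E x = card (nbhd V E {x})"

definition walk :: "'a set \<Rightarrow> 'a set set \<Rightarrow> 'a list \<Rightarrow> bool" where
  "walk V E p \<longleftrightarrow> p \<noteq> [] \<and> set p \<subseteq> V \<and>
     (\<forall>i < length p - 1. {p ! i, p ! Suc i} \<in> E)"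

text \<open>Graph distance (infinite if no path exists).\<close>
definition dist :: "'a set \<Rightarrow> 'a set set \<Rightarrow> 'a \<Rightarrow> 'a \<Rightarrow> enat" where
  "dist V E x y = Inf {enat (length p - 1) | p. walk V E p \<and> hd p = x \<and> last p = y}"

text \<open>Strong 4-core: the maximal (= union of all) sets X with
  |N(x) \<inter> X| \<ge> 4 for all x in X \<union> N(X).\<close>
definition strong4 :: "'a set \<Rightarrow> 'a set set \<Rightarrow> 'a set \<Rightarrow> bool" where
  "strong4 V E X \<longleftrightarrow> X \<subseteq> V \<and>
     (\<forall>x \<in> X \<union> nbhd V E X. card (nbhd V E {x} \<inter> X) \<ge> 4)"

definition strong_core :: "'a set \<Rightarrow> 'a set set \<Rightarrow> 'a set" where
  "strong_core V E = \<Union> {X. strong4 V E X}"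

definition robust_sapphire :: "'a set \<Rightarrow> 'a set set \<Rightarrow> 'a set \<Rightarrow> bool" where
  "robust_sapphire V E B \<longleftrightarrow> B \<subseteq> V \<and>
     (\<forall>x \<in> B \<union> nbhd V E B. insert x (nbhd V E {x}) \<subseteq> strong_core V E \<and> degree V E x \<ge> 5) \<and>
     (\<forall>b1\<in>B. \<forall>b2\<in>B. b1 \<noteq> b2 \<longrightarrow> dist V E b1 b2 \<ge> 5)"

end

theory Submission
  imports Defs
begin

(* Let S be the strong 4-core of H* and X = (S - B') \<union> A'. Then X is a strong 4-set of H.
   A vertex of A in X \<union> N_H(X) lies in A', and its H-neighbours, whose unique neighbour in A
   is in A', lie in S - B'. Any other vertex of X \<union> N_H(X) lies in S \<union> N(S), so it has four
   neighbours in S already in H*; if one of them is in B' \<subseteq> B, the vertex lies in B \<union> N(B),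
   so all of its at least five neighbours are in S and, vertices of B being at distance at
   least 5, only one of them is in B.
   For B0 = B - N_H(A), no vertex of B0 \<union> N_H(B0) is incident to an edge of F, so its closed
   neighbourhood is the same in H and H* and avoids B'. In an H-walk with at most four edges
   between two vertices of B0, every edge has an endpoint among the first two or the last two
   vertices, so the walk lies in H*. *)

lemma graph_edgeD:
  assumes "graph V E" and "{u, v} \<in> E"
  shows "u \<in> V" and "v \<in> V" and "u \<noteq> v"
  using assms unfolding graph_def by (auto simp: card_insert_if split: if_splits)

lemma mem_nbhd_singleton: "y \<in> nbhd V E {x} \<longleftrightarrow> y \<in> V \<and> y \<noteq> x \<and> {y, x} \<in> E"
  unfolding nbhd_def by auto

lemma graph_mem_nbhd_singleton:
  assumes "graph V E"
  shows "y \<in> nbhd V E {x} \<longleftrightarrow> {x, y} \<in> E"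
  using graph_edgeD[OF assms, of x y] by (auto simp: mem_nbhd_singleton insert_commute)

lemma nbhd_mono_edges: "E \<subseteq> E' \<Longrightarrow> nbhd V E X \<subseteq> nbhd V E' X"
  unfolding nbhd_def by auto

lemma finite_nbhd: "finite V \<Longrightarrow> finite (nbhd V E X)"
  unfolding nbhd_def by simp

lemma strong4_subset_strong_core: "strong4 V E X \<Longrightarrow> X \<subseteq> strong_core V E"
  unfolding strong_core_def by blast

lemma strong_core_subset: "strong_core V E \<subseteq> V"
  unfolding strong_core_def strong4_def by blast

lemma strong4_strong_core:
  assumes "finite V"
  shows "strong4 V E (strong_core V E)"
  unfolding strong4_def
proof (intro conjI ballI strong_core_subset)
  fix x assume x: "x \<in> strong_core V E \<union> nbhd V E (strong_core V E)"
  obtain X where X: "strong4 V E X" and "x \<in> X \<union> nbhd V E X"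
  proof (cases "x \<in> strong_core V E")
    case True
    then show ?thesis using that unfolding strong_core_def by blast
  next
    case False
    with x obtain y where "y \<in> strong_core V E" "{x, y} \<in> E" "x \<in> V"
      unfolding nbhd_def by blast
    then obtain X where "strong4 V E X" "y \<in> X" "x \<notin> X"
      using False strong4_subset_strong_core unfolding strong_core_def by blast
    with \<open>{x, y} \<in> E\<close> \<open>x \<in> V\<close> show ?thesis using that unfolding nbhd_def by blast
  qed
  then have "4 \<le> card (nbhd V E {x} \<inter> X)"
    unfolding strong4_def by blast
  also have "\<dots> \<le> card (nbhd V E {x} \<inter> strong_core V E)"
    using X strong4_subset_strong_core by (intro card_mono) (auto simp: assms finite_nbhd)
  finally show "4 \<le> card (nbhd V E {x} \<inter> strong_core V E)" .
qed

lemma nbhd_empty_notin_strong_core: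
  assumes "nbhd V E {x} = {}"
  shows "x \<notin> strong_core V E"
proof
  assume "x \<in> strong_core V E"
  then obtain X where "strong4 V E X" and "x \<in> X"
    unfolding strong_core_def by blast
  then have "4 \<le> card (nbhd V E {x} \<inter> X)"
    unfolding strong4_def by blast
  with assms show False by simp
qed

lemma dist_le_walk:
  "walk V E p \<Longrightarrow> hd p = x \<Longrightarrow> last p = y \<Longrightarrow> dist V E x y \<le> enat (length p - 1)"
  unfolding dist_def by (rule Inf_lower) blast

lemma le_dist:
  "(\<And>p. walk V E p \<Longrightarrow> hd p = x \<Longrightarrow> last p = y \<Longrightarrow> n \<le> enat (length p - 1))
    \<Longrightarrow> n \<le> dist V E x y"
  unfolding dist_def by (rule Inf_greatest) blast

lemma dist_le_1_if_edge:
  assumes "{x, y} \<in> E" and "x \<in> V" and "y \<in> V"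
  shows "dist V E x y \<le> 1"
proof -
  have "walk V E [x, y]"
    using assms unfolding walk_def by (auto simp: less_Suc_eq)
  then show ?thesis
    using dist_le_walk[of V E "[x, y]"] by (simp add: one_enat_def)
qed

lemma dist_le_2_if_common_nbr:
  assumes "{x, z} \<in> E" and "{z, y} \<in> E" and "x \<in> V" and "z \<in> V" and "y \<in> V"
  shows "dist V E x y \<le> 2"
proof -
  have "walk V E [x, z, y]"
    using assms unfolding walk_def by (auto simp: less_Suc_eq nth_Cons split: nat.splits)
  then show ?thesis
    using dist_le_walk[of V E "[x, z, y]"] by (simp add: numeral_eq_enat eval_nat_numeral)
qed

lemma robust_sapphireD:
  assumes "robust_sapphire V E B"
  shows "\<And>x. x \<in> B \<union> nbhd V E B \<Longrightarrow> insert x (nbhd V E {x}) \<subseteq> strong_core V E"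
    and "\<And>x. x \<in> B \<union> nbhd V E B \<Longrightarrow> 5 \<le> degree V E x"
    and "\<And>b1 b2. b1 \<in> B \<Longrightarrow> b2 \<in> B \<Longrightarrow> b1 \<noteq> b2 \<Longrightarrow> 5 \<le> dist V E b1 b2"
  using assms unfolding robust_sapphire_def by simp_all

lemma robust_sapphire_nonadjacent:
  assumes "graph V E" and "robust_sapphire V E B" and "b1 \<in> B" and "b2 \<in> B"
  shows "{b1, b2} \<notin> E"
proof
  assume edge: "{b1, b2} \<in> E"
  have "5 \<le> dist V E b1 b2"
    using robust_sapphireD(3)[OF assms(2-4)] graph_edgeD(3)[OF assms(1) edge] .
  moreover have "dist V E b1 b2 \<le> 1"
    using dist_le_1_if_edge[OF edge graph_edgeD(1,2)[OF assms(1) edge]] .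
  ultimately have "(5::enat) \<le> 1"
    by (rule order_trans)
  then show False by simp
qed

lemma robust_sapphire_unique_nbr:
  assumes "graph V E" and "robust_sapphire V E B" and "b1 \<in> B" and "b2 \<in> B"
    and "{x, b1} \<in> E" and "{x, b2} \<in> E"
  shows "b1 = b2"
proof (rule ccontr)
  assume "b1 \<noteq> b2"
  then have "5 \<le> dist V E b1 b2"
    by (rule robust_sapphireD(3)[OF assms(2-4)])
  moreover have "dist V E b1 b2 \<le> 2"
  proof (rule dist_le_2_if_common_nbr)
    show "{b1, x} \<in> E" "{x, b2} \<in> E"
      using assms(5,6) by (simp_all add: insert_commute)
    show "b1 \<in> V" "x \<in> V" "b2 \<in> V"
      using graph_edgeD[OF assms(1) assms(5)] graph_edgeD[OF assms(1) assms(6)] by simp_all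
  qed
  ultimately have "(5::enat) \<le> 2"
    by (rule order_trans)
  then show False by simp
qed

(* Es and EH are the edge sets of H* and H. *)
locale sapphire_extension =
  fixes V :: "'a set" and Es :: "'a set set" and A B :: "'a set" and F :: "'a set set"
    and EH :: "'a set set" and B1 A' B' :: "'a set"
  assumes graph: "graph V Es"
    and A_subset: "A \<subseteq> V" and B_subset: "B \<subseteq> V" and AB_disjoint: "A \<inter> B = {}"
    and A_isolated: "\<forall>a\<in>A. nbhd V Es {a} = {}"
    and sapphire: "robust_sapphire V Es B"
    and F_subset: "F \<subseteq> {{a, b} | a b. a \<in> A \<and> b \<in> B}"
    and EH_eq: "EH = Es \<union> F"
    and B1_eq: "B1 = {b \<in> B. card (nbhd V EH {b} \<inter> A) = 1}"
    and A'_eq: "A' = {a \<in> A. degree V EH a \<ge> 4 \<and> nbhd V EH {a} \<subseteq> B1}"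
    and B'_eq: "B' = nbhd V EH (A - A')"
begin

abbreviation S :: "'a set" where
  "S \<equiv> strong_core V Es"

abbreviation B0 :: "'a set" where
  "B0 \<equiv> B - nbhd V EH A"

lemma finite_V: "finite V"
  using graph unfolding graph_def by simp

lemma A_no_edge: "a \<in> A \<Longrightarrow> {a, v} \<notin> Es"
  using A_isolated graph_mem_nbhd_singleton[OF graph, of v a] by auto

lemma F_edgeD: "{u, v} \<in> F \<Longrightarrow> u \<in> A \<and> v \<in> B \<or> u \<in> B \<and> v \<in> A"
  using F_subset by (auto simp: doubleton_eq_iff)

lemma graph_EH: "graph V EH"
  unfolding graph_def
proof (rule conjI[OF finite_V], rule ballI)
  fix e assume "e \<in> EH"
  then consider "e \<in> Es" | a b where "e = {a, b}" "a \<in> A" "b \<in> B"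
    using F_subset unfolding EH_eq by blast
  then show "e \<subseteq> V \<and> card e = 2"
  proof cases
    case 1
    then show ?thesis using graph unfolding graph_def by blast
  next
    case 2
    then have "a \<noteq> b" using AB_disjoint by blast
    with 2 show ?thesis using A_subset B_subset by auto
  qed
qed

lemma EH_edge_from_A: "a \<in> A \<Longrightarrow> {a, v} \<in> EH \<Longrightarrow> v \<in> B"
  using A_no_edge F_edgeD AB_disjoint unfolding EH_eq by blast

lemma nbhd_EH_A_subset_B: "nbhd V EH A \<subseteq> B"
  using EH_edge_from_A by (auto simp: nbhd_def insert_commute)

lemma B'_subset: "B' \<subseteq> nbhd V EH A"
  using EH_edge_from_A AB_disjoint unfolding B'_eq nbhd_def by (fastforce simp: insert_commute)

lemma EH_edge_in_Es:
  assumes "{u, v} \<in> EH" and "u \<notin> A" and "u \<notin> nbhd V EH A"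
  shows "{u, v} \<in> Es"
proof (rule ccontr)
  assume "{u, v} \<notin> Es"
  then have "{u, v} \<in> F" using assms(1) unfolding EH_eq by blast
  then have "v \<in> A" using F_edgeD assms(2) by blast
  moreover have "u \<in> V" using graph_edgeD(1)[OF graph_EH assms(1)] .
  ultimately have "u \<in> nbhd V EH A"
    using assms(1,2) unfolding nbhd_def by (auto simp: insert_commute)
  with assms(3) show False by blast
qed

lemma nbhd_EH_eq_Es:
  assumes "x \<notin> A" and "x \<notin> nbhd V EH A"
  shows "nbhd V EH {x} = nbhd V Es {x}"
proof -
  have "{x, y} \<in> EH \<longleftrightarrow> {x, y} \<in> Es" for y
    using EH_edge_in_Es[OF _ assms] unfolding EH_eq by blast
  then show ?thesis
    by (auto simp: graph_mem_nbhd_singleton[OF graph] graph_mem_nbhd_singleton[OF graph_EH])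
qed

lemma B_subset_core: "B \<subseteq> S"
  using robust_sapphireD(1)[OF sapphire] by blast

lemma A_disjoint_core: "A \<inter> S = {}"
  using A_isolated nbhd_empty_notin_strong_core[of V Es] by blast

abbreviation X :: "'a set" where
  "X \<equiv> (S - B') \<union> A'"

lemma nbhd_A'_subset:
  assumes "a \<in> A'"
  shows "nbhd V EH {a} \<subseteq> S - B'"
proof
  fix y assume y: "y \<in> nbhd V EH {a}"
  then have "y \<in> B1" using assms unfolding A'_eq by blast
  then have "y \<in> B" and unique: "card (nbhd V EH {y} \<inter> A) = 1"
    unfolding B1_eq by auto
  have "y \<notin> B'"
  proof
    assume "y \<in> B'"
    then obtain a' where a': "a' \<in> A - A'" "{y, a'} \<in> EH"
      unfolding B'_eq nbhd_def by blast
    have "a' \<in> nbhd V EH {y} \<inter> A" and "a \<in> nbhd V EH {y} \<inter> A"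
      using a' y assms unfolding A'_eq
      by (auto simp: graph_mem_nbhd_singleton[OF graph_EH] insert_commute)
    then have "a' = a"
      using unique by (metis card_1_singletonE singletonD)
    with a' assms show False by blast
  qed
  then show "y \<in> S - B'"
    using \<open>y \<in> B\<close> B_subset_core by blast
qed

lemma A_near_X_in_A':
  assumes "a \<in> A" and "a \<in> X \<union> nbhd V EH X"
  shows "a \<in> A'"
proof (rule ccontr)
  assume "a \<notin> A'"
  then have "a \<notin> X" using assms(1) A_disjoint_core by blast
  with assms(2) obtain y where y: "y \<in> X" "{a, y} \<in> EH"
    unfolding nbhd_def by blast
  then have "y \<in> B" using EH_edge_from_A assms(1) by blast
  then have "y \<in> S - B'" using y AB_disjoint unfolding A'_eq by blast
  moreover have "y \<in> B'"
    using y \<open>y \<in> B\<close> \<open>a \<notin> A'\<close> assms(1) B_subset AB_disjoint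
    unfolding B'_eq nbhd_def by (auto simp: insert_commute)
  ultimately show False by blast
qed

lemma near_X_near_core:
  assumes "x \<notin> A" and "x \<in> X \<union> nbhd V EH X"
  shows "x \<in> S \<union> nbhd V Es S"
proof (cases "x \<in> X")
  case True
  then show ?thesis using assms(1) unfolding A'_eq by blast
next
  case False
  with assms(2) obtain y where y: "y \<in> X" "{x, y} \<in> EH" "x \<in> V"
    unfolding nbhd_def by blast
  show ?thesis
  proof (cases "{x, y} \<in> Es")
    case True
    then have "y \<notin> A" using A_no_edge by (metis insert_commute)
    then have "y \<in> S" using y(1) unfolding A'_eq by blast
    with True y(3) show ?thesis unfolding nbhd_def by blast
  next
    case False
    then have "{x, y} \<in> F" using y(2) unfolding EH_eq by blast
    then have "x \<in> B" using F_edgeD assms(1) by blast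
    then show ?thesis using B_subset_core by blast
  qed
qed

lemma card_nbhd_core_minus_B':
  assumes "x \<in> S \<union> nbhd V Es S"
  shows "4 \<le> card (nbhd V Es {x} \<inter> (S - B'))"
proof (cases "nbhd V Es {x} \<inter> B' = {}")
  case True
  then have "nbhd V Es {x} \<inter> (S - B') = nbhd V Es {x} \<inter> S" by blast
  then show ?thesis
    using strong4_strong_core[OF finite_V] assms unfolding strong4_def by auto
next
  case False
  then obtain y where y: "{x, y} \<in> Es" "y \<in> B"
    using B'_subset nbhd_EH_A_subset_B graph_mem_nbhd_singleton[OF graph] by blast
  have "x \<in> B \<union> nbhd V Es B"
    using y graph_edgeD(1)[OF graph y(1)] unfolding nbhd_def by blast
  then have core: "nbhd V Es {x} \<subseteq> S" and big: "5 \<le> card (nbhd V Es {x})"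
    using robust_sapphireD(1,2)[OF sapphire] unfolding degree_def by auto
  have "nbhd V Es {x} \<inter> B' \<subseteq> {y}"
  proof
    fix z assume "z \<in> nbhd V Es {x} \<inter> B'"
    then have "{x, z} \<in> Es" and "z \<in> B"
      using B'_subset nbhd_EH_A_subset_B graph_mem_nbhd_singleton[OF graph] by blast+
    then show "z \<in> {y}"
      using robust_sapphire_unique_nbr[OF graph sapphire _ y(2) _ y(1)] by blast
  qed
  then have sub: "nbhd V Es {x} - {y} \<subseteq> nbhd V Es {x} \<inter> (S - B')"
    using core by blast
  have "4 \<le> card (nbhd V Es {x}) - card {y}"
    using big by simp
  also have "\<dots> \<le> card (nbhd V Es {x} - {y})"
    by (rule diff_card_le_card_Diff) simp
  also have "\<dots> \<le> card (nbhd V Es {x} \<inter> (S - B'))"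
    using sub by (intro card_mono) (simp_all add: finite_nbhd finite_V)
  finally show ?thesis .
qed

lemma strong4_X: "strong4 V EH X"
  unfolding strong4_def
proof (intro conjI ballI)
  show "X \<subseteq> V"
    using strong_core_subset[of V Es] A_subset unfolding A'_eq by blast
next
  fix x assume x: "x \<in> X \<union> nbhd V EH X"
  show "4 \<le> card (nbhd V EH {x} \<inter> X)"
  proof (cases "x \<in> A")
    case True
    then have "x \<in> A'" using x by (rule A_near_X_in_A')
    then have "nbhd V EH {x} \<inter> X = nbhd V EH {x}"
      using nbhd_A'_subset[of x] by blast
    with \<open>x \<in> A'\<close> show ?thesis unfolding A'_eq degree_def by simp
  next
    case False
    then have "4 \<le> card (nbhd V Es {x} \<inter> (S - B'))"
      using x by (intro card_nbhd_core_minus_B' near_X_near_core)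
    also have "\<dots> \<le> card (nbhd V EH {x} \<inter> X)"
      using nbhd_mono_edges[of Es EH V "{x}"] unfolding EH_eq
      by (intro card_mono) (auto simp: finite_nbhd finite_V)
    finally show ?thesis .
  qed
qed

lemma B0_closure_cases:
  assumes "x \<in> B0 \<union> nbhd V EH B0"
  obtains "x \<in> B0"
    | b where "b \<in> B0" and "{b, x} \<in> Es" and "x \<notin> A" and "x \<notin> B"
proof (cases "x \<in> B0")
  case False
  with assms obtain b where b: "b \<in> B0" "{x, b} \<in> EH"
    unfolding nbhd_def by blast
  then have "b \<notin> A" using AB_disjoint by blast
  then have edge: "{b, x} \<in> Es"
    using EH_edge_in_Es[of b x] b by (simp add: insert_commute)
  moreover have "x \<notin> A"
    using A_no_edge[of x b] edge by (auto simp: insert_commute)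
  moreover have "x \<notin> B"
    using robust_sapphire_nonadjacent[OF graph sapphire, of b x] edge b(1) by blast
  ultimately show ?thesis using that(2) b(1) by blast
qed

lemma B0_closure_far_from_A: "x \<in> B0 \<union> nbhd V EH B0 \<Longrightarrow> x \<notin> A \<and> x \<notin> nbhd V EH A"
  by (elim B0_closure_cases) (use AB_disjoint nbhd_EH_A_subset_B in auto)

lemma B0_closure_edge_in_Es: "x \<in> B0 \<union> nbhd V EH B0 \<Longrightarrow> {x, y} \<in> EH \<Longrightarrow> {x, y} \<in> Es"
  using EH_edge_in_Es[of x y] B0_closure_far_from_A[of x] by blast

lemma B0_nbr_in_closure: "b \<in> B0 \<Longrightarrow> {b, x} \<in> EH \<Longrightarrow> x \<in> B0 \<union> nbhd V EH B0"
  using graph_edgeD(2)[OF graph_EH, of b x] unfolding nbhd_def by (auto simp: insert_commute)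

lemma B0_closure_near_B: "x \<in> B0 \<union> nbhd V EH B0 \<Longrightarrow> x \<in> B \<union> nbhd V Es B"
proof (elim B0_closure_cases)
  fix b assume "b \<in> B0" "{b, x} \<in> Es" "x \<notin> B"
  then show ?thesis
    using graph_edgeD(2)[OF graph, of b x] unfolding nbhd_def by (auto simp: insert_commute)
qed simp

lemma B0_closure_closed_nbhd_far_from_A:
  assumes x: "x \<in> B0 \<union> nbhd V EH B0"
  shows "insert x (nbhd V Es {x}) \<inter> nbhd V EH A = {}"
proof -
  have "y \<notin> nbhd V EH A" if y: "{x, y} \<in> Es" for y
  proof
    assume "y \<in> nbhd V EH A"
    then have "y \<in> B" using nbhd_EH_A_subset_B by blast
    from x show False
    proof (cases rule: B0_closure_cases)
      case 1
      then show False
        using robust_sapphire_nonadjacent[OF graph sapphire, of x y] y \<open>y \<in> B\<close> by blast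
    next
      case (2 b)
      then have "b = y"
        using robust_sapphire_unique_nbr[OF graph sapphire, of b y x] y \<open>y \<in> B\<close>
        by (simp add: insert_commute)
      with 2 \<open>y \<in> nbhd V EH A\<close> show False by blast
    qed
  qed
  then show ?thesis
    using B0_closure_far_from_A[OF x] graph_mem_nbhd_singleton[OF graph, of _ x] by blast
qed

lemma walk_between_B0_in_Es:
  assumes walk: "walk V EH p" and "hd p \<in> B0" and "last p \<in> B0" and "length p \<le> 5"
  shows "walk V Es p"
proof -
  define n where "n = length p - 1"
  have "p \<noteq> []" using walk unfolding walk_def by blast
  have edge: "{p ! i, p ! Suc i} \<in> EH" if "i < n" for i
    using walk that unfolding walk_def n_def by blast
  have ends: "p ! 0 \<in> B0" "p ! n \<in> B0"
    using assms(2,3) \<open>p \<noteq> []\<close> unfolding n_def by (simp_all add: hd_conv_nth last_conv_nth)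
  have near_end: "p ! j \<in> B0 \<union> nbhd V EH B0" if "j \<le> 1 \<or> n - 1 \<le> j" and "j \<le> n" for j
  proof -
    have "j = 0 \<or> j = n \<or> j = 1 \<and> 0 < n \<or> j = n - 1 \<and> 0 < n"
      using that by arith
    then consider "j = 0" | "j = n" | "j = 1" "0 < n" | "j = n - 1" "0 < n"
      by blast
    then show ?thesis
    proof cases
      case 3
      then show ?thesis using B0_nbr_in_closure[OF ends(1) edge[of 0]] by simp
    next
      case 4
      then have "{p ! n, p ! j} \<in> EH" using edge[of j] by (simp add: insert_commute)
      then show ?thesis by (rule B0_nbr_in_closure[OF ends(2)])
    qed (use ends in simp_all)
  qed
  have "{p ! i, p ! Suc i} \<in> Es" if "i < n" for i
  proof (cases "i \<le> 1")
    case True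
    then show ?thesis using B0_closure_edge_in_Es[OF near_end edge] that by simp
  next
    case False
    then have "n - 1 \<le> Suc i" using that assms(4) unfolding n_def by linarith
    then have "{p ! Suc i, p ! i} \<in> Es"
      using B0_closure_edge_in_Es[OF near_end[of "Suc i"], of "p ! i"] edge[OF that] that
      by (simp add: insert_commute)
    then show ?thesis by (simp add: insert_commute)
  qed
  then show ?thesis using walk unfolding walk_def n_def by blast
qed

lemma dist_B0:
  assumes "b1 \<in> B0" and "b2 \<in> B0" and "b1 \<noteq> b2"
  shows "5 \<le> dist V EH b1 b2"
proof (rule le_dist)
  fix p assume p: "walk V EH p" "hd p = b1" "last p = b2"
  show "5 \<le> enat (length p - 1)"
  proof (rule ccontr)
    assume short: "\<not> 5 \<le> enat (length p - 1)"
    then have "length p \<le> 5" by (simp add: numeral_eq_enat)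
    then have "walk V Es p"
      using walk_between_B0_in_Es p assms by simp
    then have "dist V Es b1 b2 \<le> enat (length p - 1)"
      using p(2,3) by (rule dist_le_walk)
    moreover have "5 \<le> dist V Es b1 b2"
      using robust_sapphireD(3)[OF sapphire] assms by blast
    ultimately have "5 \<le> enat (length p - 1)"
      by (rule order_trans[rotated])
    with short show False by blast
  qed
qed

lemma robust_sapphire_B0: "robust_sapphire V EH B0"
  unfolding robust_sapphire_def
proof (intro conjI ballI impI)
  show "B0 \<subseteq> V" using B_subset by blast
next
  fix x assume x: "x \<in> B0 \<union> nbhd V EH B0"
  have nbhd_eq: "nbhd V EH {x} = nbhd V Es {x}"
    using B0_closure_far_from_A[OF x] nbhd_EH_eq_Es by blast
  have near: "x \<in> B \<union> nbhd V Es B"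
    using x by (rule B0_closure_near_B)
  have "insert x (nbhd V Es {x}) \<subseteq> S - B'"
    using robust_sapphireD(1)[OF sapphire near] B0_closure_closed_nbhd_far_from_A[OF x] B'_subset
    by blast
  then show "insert x (nbhd V EH {x}) \<subseteq> strong_core V EH"
    using nbhd_eq strong4_subset_strong_core[OF strong4_X] by blast
  show "5 \<le> degree V EH x"
    using robust_sapphireD(2)[OF sapphire near] nbhd_eq unfolding degree_def by simp
next
  fix b1 b2 assume "b1 \<in> B0" "b2 \<in> B0" "b1 \<noteq> b2"
  then show "5 \<le> dist V EH b1 b2" by (rule dist_B0)
qed

end

theorem proposition6p5:
  fixes V :: "'a set" and Es :: "'a set set" and A B :: "'a set" and F :: "'a set set"
  assumes "graph V Es"
    and "A \<subseteq> V" and "B \<subseteq> V" and "A \<inter> B = {}"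
    and "\<forall>a\<in>A. nbhd V Es {a} = {}"
    and "robust_sapphire V Es B"
    and "F \<subseteq> {{a, b} | a b. a \<in> A \<and> b \<in> B}"
  defines "EH \<equiv> Es \<union> F"
  defines "B1 \<equiv> {b \<in> B. card (nbhd V EH {b} \<inter> A) = 1}"
  defines "A' \<equiv> {a \<in> A. degree V EH a \<ge> 4 \<and> nbhd V EH {a} \<subseteq> B1}"
  defines "B' \<equiv> nbhd V EH (A - A')"
  shows "(strong_core V Es - B') \<union> A' \<subseteq> strong_core V EH
         \<and> robust_sapphire V EH (B - nbhd V EH A)"
proof -
  interpret sapphire_extension V Es A B F EH B1 A' B'
    by unfold_locales (simp_all add: assms EH_def B1_def A'_def B'_def)
  show ?thesis
    using strong4_subset_strong_core[OF strong4_X] robust_sapphire_B0 by simp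
qed

end
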